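(* Let $\{G^k\}$ be a $B$-strongly connected sequence of digraphs on $\{1,\dots,I\}$, and let each $\mathbf{A}^k=(a_{ij}^k)$ be compliant with $G^k$ (constant $\kappa>0$) and column stochastic. Consider the condensed push-sum protocol with $\phi_{(i)}^0=1$, arbitrary $\mathbf{x}_{(i)}^0\in\mathbb{R}^m$, and $\phi_{(i)}^{k+1}=\sum_ja_{ij}^k\phi_{(j)}^k$, $\mathbf{x}_{(i)}^{k+1}=\frac{1}{\phi_{(i)}^{k+1}}\sum_ja_{ij}^k\phi_{(j)}^k\mathbf{x}_{(j)}^k$. Then for all $k\ge0$: (a) $\sum_{i}\phi_{(i)}^{k+1}\mathbf{x}_{(i)}^{k+1}=\sum_i\phi_{(i)}^k\mathbf{x}_{(i)}^k=\sum_i\phi_{(i)}^0\mathbf{x}_{(i)}^0$; (b) for all $i$, $$\Big\|\mathbf{x}_{(i)}^k-\frac1I\sum_{j=1}^I\phi_{(j)}^k\mathbf{x}_{(j)}^k\Big\|\le c_d\,\rho_d^k\,\|\mathbf{x}^0\|,$$ with $\tilde\kappa_d\triangleq\kappa^{2(I-1)B+1}/I$, $\rho_d\triangleq(1-\tilde\kappa_d^{(I-1)B})^{1/((I-1)B)}$, $c_d\triangleq\frac{2I}{\rho_d}\cdot\frac{2(1+\tilde\kappa_d^{-(I-1)B})}{1-\tilde\kappa_d^{(I-1)B}}$, and $\mathbf{x}^0=(\mathbf{x}^0_{(i)})_{i=1}^I$.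
   Context: A digraph at time $k$ is $G^k=(V,E^k)$, $V=\{1,\dots,I\}$, with edge $(j,i)\in E^k$ meaning $j$ can send to $i$. The sequence is $B$-strongly connected if there is an integer $B>0$ such that for every $k$ the digraph with edge set $\bigcup_{t=k}^{k+B-1}E^t$ is strongly connected. $\mathbf{A}^k$ is compliant with $G^k$ (constant $\kappa>0$) if $a_{ij}^k=0$ whenever $j\ne i$ and $(j,i)\notin E^k$, $a_{ij}^k\ge\kappa$ whenever $(j,i)\in E^k$, and $a_{ii}^k\ge\kappa$; it is column stochastic if its entries are nonnegative and $\mathbf{1}^T\mathbf{A}^k=\mathbf{1}^T$. *)

theory Defs
  imports "HOL-Analysis.Analysis"
begin

text \<open>Nodes are 1..I. Edges (j,i) mean j can send to i. A k i j is the (i,j) entry of A^k.\<close>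

definition strongly_connected :: "nat \<Rightarrow> (nat \<times> nat) set \<Rightarrow> bool" where
  "strongly_connected I E \<longleftrightarrow> (\<forall>i\<in>{1..I}. \<forall>j\<in>{1..I}. (i, j) \<in> E\<^sup>*)"

definition B_strongly_connected :: "nat \<Rightarrow> nat \<Rightarrow> (nat \<Rightarrow> (nat \<times> nat) set) \<Rightarrow> bool" where
  "B_strongly_connected I B E \<longleftrightarrow> B > 0 \<and>
     (\<forall>k. strongly_connected I (\<Union>t\<in>{k..k+B-1}. E t))"

definition compliant :: "nat \<Rightarrow> real \<Rightarrow> (nat \<times> nat) set \<Rightarrow> (nat \<Rightarrow> nat \<Rightarrow> real) \<Rightarrow> bool" where
  "compliant I \<kappa> E A \<longleftrightarrow>
     (\<forall>i\<in>{1..I}. \<forall>j\<in>{1..I}. j \<noteq> i \<and> (j, i) \<notin> E \<longrightarrow> A i j = 0) \<and>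
     (\<forall>i\<in>{1..I}. \<forall>j\<in>{1..I}. (j, i) \<in> E \<longrightarrow> A i j \<ge> \<kappa>) \<and>
     (\<forall>i\<in>{1..I}. A i i \<ge> \<kappa>)"

definition column_stochastic :: "nat \<Rightarrow> (nat \<Rightarrow> nat \<Rightarrow> real) \<Rightarrow> bool" where
  "column_stochastic I A \<longleftrightarrow>
     (\<forall>i\<in>{1..I}. \<forall>j\<in>{1..I}. A i j \<ge> 0) \<and>
     (\<forall>j\<in>{1..I}. (\<Sum>i=1..I. A i j) = 1)"

primrec ps_phi :: "nat \<Rightarrow> (nat \<Rightarrow> nat \<Rightarrow> nat \<Rightarrow> real) \<Rightarrow> nat \<Rightarrow> nat \<Rightarrow> real" where
  "ps_phi I A 0 i = 1"
| "ps_phi I A (Suc k) i = (\<Sum>j=1..I. A k i j * ps_phi I A k j)"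

primrec ps_x :: "nat \<Rightarrow> (nat \<Rightarrow> nat \<Rightarrow> nat \<Rightarrow> real) \<Rightarrow> (nat \<Rightarrow> 'a::real_vector) \<Rightarrow> nat \<Rightarrow> nat \<Rightarrow> 'a" where
  "ps_x I A x0 0 i = x0 i"
| "ps_x I A x0 (Suc k) i =
     (1 / ps_phi I A (Suc k) i) *\<^sub>R (\<Sum>j=1..I. (A k i j * ps_phi I A k j) *\<^sub>R ps_x I A x0 k j)"

definition stacked_norm :: "nat \<Rightarrow> (nat \<Rightarrow> 'a::real_normed_vector) \<Rightarrow> real" where
  "stacked_norm I x = sqrt (\<Sum>i=1..I. (norm (x i))\<^sup>2)"

definition kappa_d :: "nat \<Rightarrow> nat \<Rightarrow> real \<Rightarrow> real" where
  "kappa_d I B \<kappa> = \<kappa> ^ (2 * (I - 1) * B + 1) / real I"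

definition rho_d :: "nat \<Rightarrow> nat \<Rightarrow> real \<Rightarrow> real" where
  "rho_d I B \<kappa> = (1 - kappa_d I B \<kappa> ^ ((I - 1) * B)) powr (1 / real ((I - 1) * B))"

definition c_d :: "nat \<Rightarrow> nat \<Rightarrow> real \<Rightarrow> real" where
  "c_d I B \<kappa> = (2 * real I / rho_d I B \<kappa>) *
     (2 * (1 + 1 / kappa_d I B \<kappa> ^ ((I - 1) * B)) / (1 - kappa_d I B \<kappa> ^ ((I - 1) * B)))"

end

theory Submission
  imports Defs
begin

text \<open>
  Weights \<open>\<phi>\<close> and weighted states \<open>\<phi> x\<close> both evolve linearly under the column-stochastic
  matrices, so their sums are conserved; hence \<open>y = \<phi> x - \<phi> c\<close>, with \<open>c\<close> the average of the
  initial states, is a zero-sum trajectory. A column-stochastic matrix does not increase the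
  \<open>\<ell>\<^sub>1\<close>-norm of a zero-sum vector, and one whose entries are all at least \<open>\<delta>\<close> shrinks it by the
  factor \<open>1 - I \<delta>\<close>. By \<open>B\<close>-strong connectivity the nodes receiving mass of weight at least
  \<open>\<kappa>\<^sup>t\<close> from a fixed node grow by one per block of \<open>B\<close> steps, so every product of
  \<open>T = (I - 1) B\<close> consecutive matrices has all entries at least \<open>\<kappa>\<^sup>T\<close>. Therefore \<open>y\<close> decays
  geometrically, and since also \<open>\<phi> \<ge> \<kappa>\<^sup>T\<close>, so does \<open>x - c = y / \<phi>\<close>. The constants
  \<open>c\<^sub>d\<close> and \<open>\<rho>\<^sub>d\<close> are a crude upper bound for the resulting rate.
\<close>

lemma rtrancl_exit_edge:
  assumes "(x, y) \<in> R\<^sup>*" and "x \<in> S" and "y \<notin> S"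
  shows "\<exists>a b. (a, b) \<in> R \<and> a \<in> S \<and> b \<notin> S"
  using assms by (induction rule: rtrancl_induct) blast+

definition l1_norm :: "nat \<Rightarrow> (nat \<Rightarrow> 'a::real_normed_vector) \<Rightarrow> real" where
  "l1_norm n y = (\<Sum>i=1..n. norm (y i))"

lemma norm_le_l1_norm: "i \<in> {1..n} \<Longrightarrow> norm (y i) \<le> l1_norm n y"
  unfolding l1_norm_def by (rule member_le_sum) auto

lemma stacked_norm_nonneg: "0 \<le> stacked_norm n x"
  by (simp add: stacked_norm_def sum_nonneg)

lemma l1_norm_le_stacked_norm: "l1_norm n x \<le> real n * stacked_norm n x"
proof -
  have "norm (x j) \<le> stacked_norm n x" if "j \<in> {1..n}" for j
  proof -
    have "(norm (x j))\<^sup>2 \<le> (\<Sum>i=1..n. (norm (x i))\<^sup>2)"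
      by (rule member_le_sum) (use that in auto)
    then have "sqrt ((norm (x j))\<^sup>2) \<le> stacked_norm n x"
      unfolding stacked_norm_def by (rule real_sqrt_le_mono)
    then show ?thesis by simp
  qed
  then have "l1_norm n x \<le> (\<Sum>i=1..n. stacked_norm n x)"
    unfolding l1_norm_def by (rule sum_mono)
  then show ?thesis by simp
qed

lemma l1_norm_centered_le:
  fixes x :: "nat \<Rightarrow> 'a::real_normed_vector"
  shows "l1_norm n (\<lambda>j. x j - (1 / real n) *\<^sub>R (\<Sum>i=1..n. x i)) \<le> 2 * l1_norm n x"
proof -
  let ?c = "(1 / real n) *\<^sub>R (\<Sum>i=1..n. x i)"
  have "l1_norm n (\<lambda>j. x j - ?c) \<le> (\<Sum>j=1..n. norm (x j) + norm ?c)"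
    unfolding l1_norm_def by (rule sum_mono) (rule norm_triangle_ineq4)
  also have "\<dots> \<le> l1_norm n x + norm (\<Sum>i=1..n. x i)"
    by (cases "n = 0") (simp_all add: l1_norm_def sum.distrib)
  also have "\<dots> \<le> 2 * l1_norm n x"
    using norm_sum[of x "{1..n}"] by (simp add: l1_norm_def)
  finally show ?thesis .
qed

lemma sum_column_stochastic_scaleR:
  fixes M :: "nat \<Rightarrow> nat \<Rightarrow> real" and y :: "nat \<Rightarrow> 'a::real_vector"
  assumes "\<And>j. j \<in> {1..n} \<Longrightarrow> (\<Sum>i=1..n. M i j) = 1"
  shows "(\<Sum>i=1..n. \<Sum>j=1..n. M i j *\<^sub>R y j) = (\<Sum>j=1..n. y j)"
proof -
  have "(\<Sum>i=1..n. \<Sum>j=1..n. M i j *\<^sub>R y j) = (\<Sum>j=1..n. (\<Sum>i=1..n. M i j) *\<^sub>R y j)"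
    by (subst sum.swap) (simp add: scaleR_sum_left)
  also have "\<dots> = (\<Sum>j=1..n. y j)"
    using assms by simp
  finally show ?thesis .
qed

lemma l1_norm_contraction_zero_sum:
  fixes M :: "nat \<Rightarrow> nat \<Rightarrow> real" and y :: "nat \<Rightarrow> 'a::real_normed_vector"
  assumes ge: "\<And>i j. i \<in> {1..n} \<Longrightarrow> j \<in> {1..n} \<Longrightarrow> c \<le> M i j"
    and colsum: "\<And>j. j \<in> {1..n} \<Longrightarrow> (\<Sum>i=1..n. M i j) = 1"
    and zero_sum: "(\<Sum>j=1..n. y j) = 0"
  shows "l1_norm n (\<lambda>i. \<Sum>j=1..n. M i j *\<^sub>R y j) \<le> (1 - real n * c) * l1_norm n y"
proof -
  \<comment> \<open>Subtracting \<open>c\<close> from every entry does not change the product with a zero-sum vector.\<close>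
  have shift: "(\<Sum>j=1..n. M i j *\<^sub>R y j) = (\<Sum>j=1..n. (M i j - c) *\<^sub>R y j)" for i
    using zero_sum by (simp add: scaleR_diff_left sum_subtractf scaleR_sum_right[symmetric])
  have "norm (\<Sum>j=1..n. (M i j - c) *\<^sub>R y j) \<le> (\<Sum>j=1..n. (M i j - c) * norm (y j))"
    if "i \<in> {1..n}" for i
    using norm_sum[of "\<lambda>j. (M i j - c) *\<^sub>R y j" "{1..n}"] ge[OF that] by simp
  then have "l1_norm n (\<lambda>i. \<Sum>j=1..n. M i j *\<^sub>R y j)
      \<le> (\<Sum>i=1..n. \<Sum>j=1..n. (M i j - c) * norm (y j))"
    unfolding l1_norm_def shift by (rule sum_mono)
  also have "\<dots> = (\<Sum>j=1..n. (\<Sum>i=1..n. M i j - c) * norm (y j))"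
    by (subst sum.swap) (simp add: sum_distrib_right)
  also have "\<dots> = (\<Sum>j=1..n. (1 - real n * c) * norm (y j))"
    using colsum by (intro sum.cong refl) (simp add: sum_subtractf)
  also have "\<dots> = (1 - real n * c) * l1_norm n y"
    by (simp add: l1_norm_def sum_distrib_left)
  finally show ?thesis .
qed

primrec transition_matrix ::
    "nat \<Rightarrow> (nat \<Rightarrow> nat \<Rightarrow> nat \<Rightarrow> real) \<Rightarrow> nat \<Rightarrow> nat \<Rightarrow> nat \<Rightarrow> nat \<Rightarrow> real" where
  "transition_matrix I A s 0 i j = (if i = j then 1 else 0)"
| "transition_matrix I A s (Suc t) i j = (\<Sum>l=1..I. A (s + t) i l * transition_matrix I A s t l j)"

locale column_stochastic_sequence =
  fixes I :: nat and A :: "nat \<Rightarrow> nat \<Rightarrow> nat \<Rightarrow> real"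
  assumes column_stochastic: "\<And>k. column_stochastic I (A k)"
begin

lemma A_nonneg: "i \<in> {1..I} \<Longrightarrow> j \<in> {1..I} \<Longrightarrow> 0 \<le> A k i j"
  using column_stochastic[of k] unfolding column_stochastic_def by blast

lemma A_colsum: "j \<in> {1..I} \<Longrightarrow> (\<Sum>i=1..I. A k i j) = 1"
  using column_stochastic[of k] unfolding column_stochastic_def by blast

definition trajectory :: "(nat \<Rightarrow> nat \<Rightarrow> 'a::real_vector) \<Rightarrow> bool" where
  "trajectory v \<longleftrightarrow> (\<forall>k. \<forall>i\<in>{1..I}. v (Suc k) i = (\<Sum>l=1..I. A k i l *\<^sub>R v k l))"

lemma trajectory_diff:
  "trajectory v \<Longrightarrow> trajectory w \<Longrightarrow> trajectory (\<lambda>k i. v k i - w k i)"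
  by (simp add: trajectory_def scaleR_diff_right sum_subtractf)

lemma trajectory_scaleR_const:
  "trajectory v \<Longrightarrow> trajectory (\<lambda>k i. v k i *\<^sub>R c)"
  by (simp add: trajectory_def scaleR_sum_left)

lemma trajectory_ps_phi: "trajectory (ps_phi I A)"
  by (simp add: trajectory_def)

lemma trajectory_sum_Suc:
  "trajectory v \<Longrightarrow> (\<Sum>i=1..I. v (Suc k) i) = (\<Sum>i=1..I. v k i)"
  unfolding trajectory_def
  using sum_column_stochastic_scaleR[of I "A k" "v k", OF A_colsum] by simp

lemma trajectory_sum_eq:
  "trajectory v \<Longrightarrow> (\<Sum>i=1..I. v k i) = (\<Sum>i=1..I. v 0 i)"
  by (induction k) (simp_all add: trajectory_sum_Suc del: One_nat_def)

lemma trajectory_transition_matrix: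
  assumes "trajectory v" and "i \<in> {1..I}"
  shows "v (s + t) i = (\<Sum>j=1..I. transition_matrix I A s t i j *\<^sub>R v s j)"
  using assms(2)
proof (induction t arbitrary: i)
  case 0
  then show ?case
    by (simp add: if_distrib[of "\<lambda>a. a *\<^sub>R _"] cong: if_cong)
next
  case (Suc t)
  have "v (s + Suc t) i = (\<Sum>l=1..I. A (s + t) i l *\<^sub>R v (s + t) l)"
    using assms(1) Suc.prems by (simp add: trajectory_def)
  also have "\<dots> = (\<Sum>l=1..I. \<Sum>j=1..I. (A (s + t) i l * transition_matrix I A s t l j) *\<^sub>R v s j)"
    using Suc.IH by (simp add: scaleR_sum_right)
  also have "\<dots> = (\<Sum>j=1..I. transition_matrix I A s (Suc t) i j *\<^sub>R v s j)"
    by (subst sum.swap) (simp add: scaleR_sum_left)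
  finally show ?case .
qed

lemma transition_matrix_nonneg:
  "i \<in> {1..I} \<Longrightarrow> j \<in> {1..I} \<Longrightarrow> 0 \<le> transition_matrix I A s t i j"
  by (induction t arbitrary: i) (auto intro!: sum_nonneg simp: A_nonneg)

lemma transition_matrix_colsum:
  "j \<in> {1..I} \<Longrightarrow> (\<Sum>i=1..I. transition_matrix I A s t i j) = 1"
proof (induction t)
  case (Suc t)
  then show ?case
    using sum_column_stochastic_scaleR[of I "A (s + t)" "\<lambda>l. transition_matrix I A s t l j"]
    by (simp add: A_colsum del: One_nat_def)
qed simp

lemma l1_norm_trajectory_Suc_le:
  assumes "trajectory v" and "(\<Sum>i=1..I. v k i) = 0"
  shows "l1_norm I (v (Suc k)) \<le> l1_norm I (v k)"
proof -
  have "l1_norm I (v (Suc k)) = l1_norm I (\<lambda>i. \<Sum>l=1..I. A k i l *\<^sub>R v k l)"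
    using assms(1) by (simp add: l1_norm_def trajectory_def)
  also have "\<dots> \<le> (1 - real I * 0) * l1_norm I (v k)"
    by (rule l1_norm_contraction_zero_sum) (simp_all add: A_nonneg A_colsum assms(2) del: One_nat_def)
  finally show ?thesis by simp
qed

end

locale push_sum_network = column_stochastic_sequence I A
  for I :: nat and A :: "nat \<Rightarrow> nat \<Rightarrow> nat \<Rightarrow> real" +
  fixes B :: nat and \<kappa> :: real and E :: "nat \<Rightarrow> (nat \<times> nat) set"
  assumes edges: "\<And>k. E k \<subseteq> {1..I} \<times> {1..I}"
    and B_strongly_connected: "B_strongly_connected I B E"
    and kappa_pos: "0 < \<kappa>"
    and compliant: "\<And>k. compliant I \<kappa> (E k) (A k)"
begin

abbreviation T :: nat where
  "T \<equiv> (I - 1) * B"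

lemma A_diag_ge: "i \<in> {1..I} \<Longrightarrow> \<kappa> \<le> A k i i"
  using compliant[of k] unfolding compliant_def by blast

lemma A_edge_ge: "(j, i) \<in> E k \<Longrightarrow> \<kappa> \<le> A k i j"
  using compliant[of k] edges[of k] unfolding compliant_def by blast

lemma B_pos: "0 < B"
  using B_strongly_connected unfolding B_strongly_connected_def by blast

lemma kappa_le_1:
  assumes "1 \<le> I" shows "\<kappa> \<le> 1"
proof -
  have "A 0 1 1 \<le> (\<Sum>i=1..I. A 0 i 1)"
    by (rule member_le_sum) (use assms A_nonneg in auto)
  then show ?thesis
    using A_colsum[of 1 0] A_diag_ge[of 1 0] assms by simp
qed

definition reach_set :: "nat \<Rightarrow> nat \<Rightarrow> nat \<Rightarrow> nat set" where
  "reach_set s j t = {i \<in> {1..I}. \<kappa> ^ t \<le> transition_matrix I A s t i j}"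

lemma reach_set_subset: "reach_set s j t \<subseteq> {1..I}"
  unfolding reach_set_def by blast

lemma reach_set_0: "j \<in> {1..I} \<Longrightarrow> j \<in> reach_set s j 0"
  unfolding reach_set_def by simp

lemma reach_set_Suc:
  assumes j: "j \<in> {1..I}" and l: "l \<in> reach_set s j t" and i: "i \<in> {1..I}"
    and A_ge: "\<kappa> \<le> A (s + t) i l"
  shows "i \<in> reach_set s j (Suc t)"
proof -
  have l_in: "l \<in> {1..I}" and ge: "\<kappa> ^ t \<le> transition_matrix I A s t l j"
    using l unfolding reach_set_def by auto
  have "\<kappa> ^ Suc t \<le> A (s + t) i l * transition_matrix I A s t l j"
    unfolding power_Suc by (rule mult_mono) (use A_ge ge kappa_pos in auto)
  also have "\<dots> \<le> transition_matrix I A s (Suc t) i j"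
    unfolding transition_matrix.simps
    by (rule member_le_sum) (use l_in i j A_nonneg transition_matrix_nonneg in auto)
  finally show ?thesis
    using i unfolding reach_set_def by simp
qed

lemma reach_set_mono:
  assumes "j \<in> {1..I}" and "t \<le> t'"
  shows "reach_set s j t \<subseteq> reach_set s j t'"
proof (rule lift_Suc_mono_le[of "reach_set s j"])
  show "reach_set s j t \<subseteq> reach_set s j (Suc t)" for t
    using reach_set_Suc[OF assms(1)] A_diag_ge reach_set_subset by blast
qed (fact assms(2))

lemma reach_set_block_edge:
  assumes j: "j \<in> {1..I}" and l: "l \<in> reach_set s j (q * B)"
    and e: "(l, i) \<in> (\<Union>t\<in>{s + q * B..s + q * B + B - 1}. E t)"
  shows "i \<in> reach_set s j (Suc q * B)"
proof -
  obtain t0 where t0: "t0 \<in> {s + q * B..s + q * B + B - 1}" and e': "(l, i) \<in> E t0"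
    using e by blast
  define u where "u = t0 - (s + q * B)"
  have u: "u < B" and t0_eq: "t0 = s + (q * B + u)"
    using t0 B_pos unfolding u_def by auto
  have "l \<in> reach_set s j (q * B + u)"
    using reach_set_mono[OF j, of "q * B" "q * B + u"] l by auto
  then have "i \<in> reach_set s j (Suc (q * B + u))"
    using reach_set_Suc[OF j] A_edge_ge[OF e'] e' edges t0_eq by blast
  then show ?thesis
    using reach_set_mono[OF j, of "Suc (q * B + u)" "Suc q * B"] u by auto
qed

lemma card_reach_set_block:
  assumes j: "j \<in> {1..I}"
  shows "min (Suc q) I \<le> card (reach_set s j (q * B))"
proof (induction q)
  case 0
  have "0 < card (reach_set s j 0)"
    using reach_set_0[OF j] finite_subset[OF reach_set_subset] card_gt_0_iff by blast
  then show ?case by simp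
next
  case (Suc q)
  let ?R = "reach_set s j (q * B)" and ?R' = "reach_set s j (Suc q * B)"
  have fin: "finite (reach_set s j t)" for t
    using finite_subset[OF reach_set_subset] by blast
  have sub: "?R \<subseteq> ?R'"
    using reach_set_mono[OF j] by simp
  show ?case
  proof (cases "?R = {1..I}")
    case True
    then have "?R' = {1..I}"
      using sub reach_set_subset by blast
    then show ?thesis by simp
  next
    case False
    then obtain i where i: "i \<in> {1..I}" "i \<notin> ?R"
      using reach_set_subset by blast
    let ?G = "\<Union>t\<in>{s + q * B..s + q * B + B - 1}. E t"
    have ji: "(j, i) \<in> ?G\<^sup>*"
      using B_strongly_connected i j
      unfolding B_strongly_connected_def strongly_connected_def by blast
    have "j \<in> ?R"
      using reach_set_mono[OF j, of 0 "q * B"] reach_set_0[OF j] by blast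
    then obtain a b where "(a, b) \<in> ?G" "a \<in> ?R" "b \<notin> ?R"
      using rtrancl_exit_edge[OF ji _ i(2)] by blast
    then have new: "insert b ?R \<subseteq> ?R'" and "b \<notin> ?R"
      using reach_set_block_edge[OF j] sub by blast+
    then have "card (insert b ?R) = Suc (card ?R)"
      using fin by simp
    then have "Suc (card ?R) \<le> card ?R'"
      using card_mono[OF fin new] by simp
    then show ?thesis
      using Suc.IH by simp
  qed
qed

lemma reach_set_full:
  assumes "j \<in> {1..I}"
  shows "reach_set s j T = {1..I}"
proof (rule card_subset_eq[OF finite_atLeastAtMost reach_set_subset])
  have "card (reach_set s j T) \<le> I"
    using card_mono[OF finite_atLeastAtMost reach_set_subset] by simp
  then show "card (reach_set s j T) = card {1..I}"
    using card_reach_set_block[OF assms, of "I - 1" s] assms by simp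
qed

lemma transition_matrix_ge:
  "i \<in> {1..I} \<Longrightarrow> j \<in> {1..I} \<Longrightarrow> \<kappa> ^ T \<le> transition_matrix I A s T i j"
  using reach_set_full[of j s] unfolding reach_set_def by blast

lemma card_mult_kappa_power_le_1: "real I * \<kappa> ^ T \<le> 1"
proof (cases "I = 0")
  case False
  have "(\<Sum>i=1..I. \<kappa> ^ T) \<le> (\<Sum>i=1..I. transition_matrix I A 0 T i 1)"
    using False by (intro sum_mono transition_matrix_ge) auto
  also have "\<dots> = 1"
    using False transition_matrix_colsum by simp
  finally show ?thesis by simp
qed simp

lemma l1_norm_trajectory_decay:
  assumes traj: "trajectory v" and zero_sum: "(\<Sum>i=1..I. v 0 i) = 0"
  shows "l1_norm I (v k) \<le> (1 - real I * \<kappa> ^ T) ^ (k div T) * l1_norm I (v 0)"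
proof -
  let ?r = "1 - real I * \<kappa> ^ T"
  have zero_sum_k: "(\<Sum>i=1..I. v k i) = 0" for k
    using trajectory_sum_eq[OF traj] zero_sum by simp
  have block: "l1_norm I (v (s + T)) \<le> ?r * l1_norm I (v s)" for s
  proof -
    have "l1_norm I (v (s + T)) = l1_norm I (\<lambda>i. \<Sum>j=1..I. transition_matrix I A s T i j *\<^sub>R v s j)"
      unfolding l1_norm_def using trajectory_transition_matrix[OF traj] by simp
    also have "\<dots> \<le> ?r * l1_norm I (v s)"
      by (rule l1_norm_contraction_zero_sum)
        (simp_all add: transition_matrix_ge transition_matrix_colsum zero_sum_k del: One_nat_def)
    finally show ?thesis .
  qed
  have blocks: "l1_norm I (v (q * T)) \<le> ?r ^ q * l1_norm I (v 0)" for q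
  proof (induction q)
    case (Suc q)
    have "l1_norm I (v (Suc q * T)) \<le> ?r * l1_norm I (v (q * T))"
      using block[of "q * T"] by (simp add: add.commute)
    also have "\<dots> \<le> ?r * (?r ^ q * l1_norm I (v 0))"
      using Suc.IH card_mult_kappa_power_le_1 by (simp add: mult_left_mono)
    finally show ?case by (simp add: mult.assoc)
  qed simp
  have "l1_norm I (v k) \<le> l1_norm I (v (k div T * T))"
    by (rule lift_Suc_antimono_le[of "\<lambda>n. l1_norm I (v n)"])
      (simp_all add: l1_norm_trajectory_Suc_le[OF traj zero_sum_k])
  also have "\<dots> \<le> ?r ^ (k div T) * l1_norm I (v 0)"
    by (rule blocks)
  finally show ?thesis .
qed

lemma ps_phi_ge_power: "i \<in> {1..I} \<Longrightarrow> \<kappa> ^ k \<le> ps_phi I A k i"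
proof (induction k arbitrary: i)
  case (Suc k)
  have "\<kappa> ^ Suc k \<le> A k i i * ps_phi I A k i"
    unfolding power_Suc by (rule mult_mono) (use Suc A_diag_ge A_nonneg kappa_pos in auto)
  also have "\<dots> \<le> ps_phi I A (Suc k) i"
    unfolding ps_phi.simps
  proof (rule member_le_sum)
    show "0 \<le> A k i j * ps_phi I A k j" if "j \<in> {1..I} - {i}" for j
      using that Suc A_nonneg[of i j k] order_trans[OF zero_le_power[of \<kappa> k]] kappa_pos
      by (simp add: Suc.IH)
  qed (use Suc.prems in auto)
  finally show ?case .
qed simp

lemma ps_phi_pos: "i \<in> {1..I} \<Longrightarrow> 0 < ps_phi I A k i"
  using ps_phi_ge_power[of i k] kappa_pos by (meson less_le_trans zero_less_power)

lemma sum_ps_phi: "(\<Sum>i=1..I. ps_phi I A k i) = real I"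
  using trajectory_sum_eq[OF trajectory_ps_phi, of k] by simp

lemma ps_phi_ge_kappa_power_T:
  assumes i: "i \<in> {1..I}"
  shows "\<kappa> ^ T \<le> ps_phi I A k i"
proof (cases "T \<le> k")
  case True
  have "(\<Sum>j=1..I. \<kappa> ^ T * ps_phi I A (k - T) j) = \<kappa> ^ T * real I"
    by (simp add: sum_distrib_left[symmetric] sum_ps_phi del: One_nat_def)
  then have "\<kappa> ^ T \<le> (\<Sum>j=1..I. \<kappa> ^ T * ps_phi I A (k - T) j)"
    using i kappa_pos by simp
  also have "\<dots> \<le> (\<Sum>j=1..I. transition_matrix I A (k - T) T i j * ps_phi I A (k - T) j)"
    using transition_matrix_ge[OF i] ps_phi_pos by (intro sum_mono mult_right_mono) (auto intro: less_imp_le)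
  also have "\<dots> = ps_phi I A k i"
    using trajectory_transition_matrix[OF trajectory_ps_phi i, of "k - T" T] True by simp
  finally show ?thesis .
next
  case False
  then have "\<kappa> ^ T \<le> \<kappa> ^ k"
    using kappa_pos kappa_le_1 i by (intro power_decreasing) auto
  then show ?thesis
    using ps_phi_ge_power[OF i, of k] by linarith
qed

lemma trajectory_weighted_state:
  "trajectory (\<lambda>k i. ps_phi I A k i *\<^sub>R ps_x I A x0 k i)"
  unfolding trajectory_def
proof (intro allI ballI)
  fix k i assume "i \<in> {1..I}"
  then have "ps_phi I A (Suc k) i \<noteq> 0"
    using ps_phi_pos by (metis less_irrefl)
  then show "ps_phi I A (Suc k) i *\<^sub>R ps_x I A x0 (Suc k) i
      = (\<Sum>l=1..I. A k i l *\<^sub>R ps_phi I A k l *\<^sub>R ps_x I A x0 k l)"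
    by (simp del: ps_phi.simps)
qed

lemma ps_x_deviation_le:
  fixes x0 :: "nat \<Rightarrow> 'a::real_normed_vector"
  assumes i: "i \<in> {1..I}"
  shows "norm (ps_x I A x0 k i - (1 / real I) *\<^sub>R (\<Sum>j=1..I. x0 j))
    \<le> 2 * real I / \<kappa> ^ T * (1 - real I * \<kappa> ^ T) ^ (k div T) * stacked_norm I x0"
proof -
  define c where "c = (1 / real I) *\<^sub>R (\<Sum>j=1..I. x0 j)"
  define y where "y k j = ps_phi I A k j *\<^sub>R (ps_x I A x0 k j - c)" for k j
  have traj: "trajectory y"
    unfolding y_def scaleR_diff_right
    by (intro trajectory_diff trajectory_weighted_state trajectory_scaleR_const trajectory_ps_phi)
  have zero_sum: "(\<Sum>j=1..I. y 0 j) = 0"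
    using i by (simp add: y_def c_def sum_subtractf sum_constant_scaleR del: One_nat_def)
  have "ps_phi I A k i * norm (ps_x I A x0 k i - c) = norm (y k i)"
    using ps_phi_pos[OF i, of k] by (simp add: y_def)
  also have "\<dots> \<le> (1 - real I * \<kappa> ^ T) ^ (k div T) * l1_norm I (y 0)"
    using norm_le_l1_norm[OF i] l1_norm_trajectory_decay[OF traj zero_sum] by (rule order_trans)
  also have "\<dots> \<le> (1 - real I * \<kappa> ^ T) ^ (k div T) * (2 * real I * stacked_norm I x0)"
  proof (rule mult_left_mono)
    have "y 0 = (\<lambda>j. x0 j - c)"
      by (rule ext) (simp add: y_def)
    then have "l1_norm I (y 0) \<le> 2 * l1_norm I x0"
      using l1_norm_centered_le[of I x0] unfolding c_def by simp
    then show "l1_norm I (y 0) \<le> 2 * real I * stacked_norm I x0"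
      using l1_norm_le_stacked_norm[of I x0] by simp
  qed (use card_mult_kappa_power_le_1 in simp)
  finally have "ps_phi I A k i * norm (ps_x I A x0 k i - c)
      \<le> (1 - real I * \<kappa> ^ T) ^ (k div T) * (2 * real I * stacked_norm I x0)" .
  moreover have "\<kappa> ^ T * norm (ps_x I A x0 k i - c) \<le> ps_phi I A k i * norm (ps_x I A x0 k i - c)"
    using ps_phi_ge_kappa_power_T[OF i] by (rule mult_right_mono) simp
  ultimately show ?thesis
    using kappa_pos unfolding c_def by (simp add: field_simps)
qed

end

lemma kappa_d_bounds:
  assumes I: "2 \<le> I" and \<kappa>: "0 < \<kappa>" "\<kappa> \<le> 1"
  shows "0 < kappa_d I B \<kappa>" and "kappa_d I B \<kappa> \<le> \<kappa>" and "kappa_d I B \<kappa> < 1"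
proof -
  have "\<kappa> ^ (2 * (I - 1) * B + 1) \<le> \<kappa> ^ 1"
    using \<kappa> by (intro power_decreasing) auto
  then have "kappa_d I B \<kappa> \<le> \<kappa> / 2"
    unfolding kappa_d_def using I \<kappa> by (simp add: divide_le_eq)
  then show "kappa_d I B \<kappa> \<le> \<kappa>" and "kappa_d I B \<kappa> < 1"
    using \<kappa> by simp_all
  show "0 < kappa_d I B \<kappa>"
    unfolding kappa_d_def using I \<kappa> by simp
qed

lemma rho_d_power_ge:
  assumes T: "0 < (I - 1) * B"
    and e: "0 < kappa_d I B \<kappa> ^ ((I - 1) * B)" "kappa_d I B \<kappa> ^ ((I - 1) * B) < 1"
  shows "(1 - kappa_d I B \<kappa> ^ ((I - 1) * B)) ^ Suc (k div ((I - 1) * B)) \<le> rho_d I B \<kappa> ^ k"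
proof -
  let ?T = "(I - 1) * B" and ?e = "kappa_d I B \<kappa> ^ ((I - 1) * B)"
  have \<rho>_T: "rho_d I B \<kappa> ^ ?T = 1 - ?e"
    using assms unfolding rho_d_def by (simp add: powr_realpow[symmetric] powr_powr)
  have \<rho>: "0 \<le> rho_d I B \<kappa>" "rho_d I B \<kappa> \<le> 1"
    using e unfolding rho_d_def by (auto intro: powr_le1)
  have "k = k div ?T * ?T + k mod ?T"
    by (rule div_mult_mod_eq[symmetric])
  then have "k \<le> Suc (k div ?T) * ?T"
    using mod_less_divisor[OF T, of k] by simp
  then have "rho_d I B \<kappa> ^ (Suc (k div ?T) * ?T) \<le> rho_d I B \<kappa> ^ k"
    using \<rho> by (intro power_decreasing) auto
  then show ?thesis
    by (simp only: mult.commute[of "Suc _"] power_mult[of _ ?T] \<rho>_T)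
qed

lemma push_sum_rate_le_c_d_rho_d:
  fixes \<kappa> :: real and I B k :: nat
  defines "T \<equiv> (I - 1) * B"
  assumes I: "2 \<le> I" and B: "0 < B" and \<kappa>: "0 < \<kappa>" "\<kappa> \<le> 1"
    and I_kappa: "real I * \<kappa> ^ T \<le> 1"
  shows "2 * real I / \<kappa> ^ T * (1 - real I * \<kappa> ^ T) ^ (k div T) \<le> c_d I B \<kappa> * rho_d I B \<kappa> ^ k"
proof -
  define e where "e = kappa_d I B \<kappa> ^ T"
  define \<rho> where "\<rho> = rho_d I B \<kappa>"
  define q where "q = k div T"
  have T: "0 < T"
    using I B unfolding T_def by simp
  have K: "0 < kappa_d I B \<kappa>" "kappa_d I B \<kappa> \<le> \<kappa>" "kappa_d I B \<kappa> < 1"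
    using kappa_d_bounds[OF I \<kappa>] by blast+
  have e: "0 < e" "e < 1" "e \<le> \<kappa> ^ T"
    using K T unfolding e_def by (auto intro: power_mono simp: power_less_one_iff)
  have \<rho>: "0 < \<rho>" "\<rho> \<le> 1"
    using e unfolding \<rho>_def rho_d_def e_def T_def by (auto intro: powr_le1)
  have c_d: "c_d I B \<kappa> * (1 - e) = 2 * (2 * real I * (1 + 1 / e) / \<rho>)"
    using e unfolding c_d_def \<rho>_def[symmetric] e_def[symmetric] T_def[symmetric] by simp
  have c_d_ge: "2 * real I / e \<le> c_d I B \<kappa> * (1 - e)"
  proof -
    have "2 * real I / e \<le> 2 * real I * (1 + 1 / e)"
      using mult_left_mono[of "1 / e" "1 + 1 / e" "2 * real I"] by simp
    also have "\<dots> \<le> 2 * real I * (1 + 1 / e) / \<rho>"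
      using divide_left_mono[of \<rho> 1 "2 * real I * (1 + 1 / e)"] e \<rho> by simp
    also have "\<dots> \<le> c_d I B \<kappa> * (1 - e)"
    proof -
      have "0 \<le> 2 * real I * (1 + 1 / e) / \<rho>"
        using e \<rho> by simp
      then show ?thesis
        unfolding c_d by linarith
    qed
    finally show ?thesis .
  qed
  have "2 * real I / \<kappa> ^ T * (1 - real I * \<kappa> ^ T) ^ q \<le> 2 * real I / e * (1 - e) ^ q"
  proof (rule mult_mono)
    show "2 * real I / \<kappa> ^ T \<le> 2 * real I / e"
      using e \<kappa> by (intro divide_left_mono) auto
    have "\<kappa> ^ T \<le> real I * \<kappa> ^ T"
      using I \<kappa> by simp
    then show "(1 - real I * \<kappa> ^ T) ^ q \<le> (1 - e) ^ q"
      using e I_kappa by (intro power_mono) linarith+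
  qed (use e I_kappa in auto)
  also have "\<dots> \<le> c_d I B \<kappa> * (1 - e) * (1 - e) ^ q"
    using c_d_ge e by (intro mult_right_mono) auto
  also have "\<dots> \<le> c_d I B \<kappa> * \<rho> ^ k"
    unfolding mult.assoc power_Suc[symmetric]
  proof (rule mult_left_mono)
    show "(1 - e) ^ Suc q \<le> \<rho> ^ k"
      using rho_d_power_ge T e unfolding e_def \<rho>_def q_def T_def by blast
    have "0 \<le> c_d I B \<kappa> * (1 - e)"
      using order_trans[OF _ c_d_ge, of 0] e by simp
    then show "0 \<le> c_d I B \<kappa>"
      using e by (simp add: zero_le_mult_iff)
  qed
  finally show ?thesis unfolding q_def \<rho>_def .
qed

theorem mainTheorem12:
  fixes I B :: nat and \<kappa> :: real
    and E :: "nat \<Rightarrow> (nat \<times> nat) set"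
    and A :: "nat \<Rightarrow> nat \<Rightarrow> nat \<Rightarrow> real"
    and x0 :: "nat \<Rightarrow> real ^ 'm"
  assumes edges: "\<And>k. E k \<subseteq> {1..I} \<times> {1..I}"
    and Bsc: "B_strongly_connected I B E"
    and kpos: "\<kappa> > 0"
    and comp: "\<And>k. compliant I \<kappa> (E k) (A k)"
    and colst: "\<And>k. column_stochastic I (A k)"
  shows "(\<forall>k. (\<Sum>i=1..I. ps_phi I A (Suc k) i *\<^sub>R ps_x I A x0 (Suc k) i)
               = (\<Sum>i=1..I. ps_phi I A k i *\<^sub>R ps_x I A x0 k i)
          \<and> (\<Sum>i=1..I. ps_phi I A k i *\<^sub>R ps_x I A x0 k i)
               = (\<Sum>i=1..I. ps_phi I A 0 i *\<^sub>R x0 i))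
       \<and> (\<forall>k. \<forall>i\<in>{1..I}.
           norm (ps_x I A x0 k i - (1 / real I) *\<^sub>R (\<Sum>j=1..I. ps_phi I A k j *\<^sub>R ps_x I A x0 k j))
             \<le> c_d I B \<kappa> * rho_d I B \<kappa> ^ k * stacked_norm I x0)"
proof -
  interpret push_sum_network I A B \<kappa> E
    by unfold_locales (fact assms)+
  have conserved: "(\<Sum>i=1..I. ps_phi I A k i *\<^sub>R ps_x I A x0 k i) = (\<Sum>i=1..I. x0 i)" for k
    using trajectory_sum_eq[OF trajectory_weighted_state[of x0], of k] by simp
  have "norm (ps_x I A x0 k i - (1 / real I) *\<^sub>R (\<Sum>j=1..I. x0 j))
      \<le> c_d I B \<kappa> * rho_d I B \<kappa> ^ k * stacked_norm I x0" if i: "i \<in> {1..I}" for k i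
  proof (cases "I = 1")
    case True
    \<comment> \<open>Then \<open>T = 0\<close>, so \<open>\<rho>\<^sub>d = 0 powr 0 = 0\<close> and \<open>c\<^sub>d\<close> vanishes through division by zero.\<close>
    then have "ps_phi I A k i = 1" and "c_d I B \<kappa> = 0"
      using i sum_ps_phi[of k] conserved[of k] by (simp_all add: c_d_def rho_d_def)
    then show ?thesis
      using True i conserved[of k] by simp
  next
    case False
    then have "2 \<le> I"
      using i by simp
    have "norm (ps_x I A x0 k i - (1 / real I) *\<^sub>R (\<Sum>j=1..I. x0 j))
        \<le> 2 * real I / \<kappa> ^ T * (1 - real I * \<kappa> ^ T) ^ (k div T) * stacked_norm I x0"
      by (rule ps_x_deviation_le[OF i])
    also have "\<dots> \<le> c_d I B \<kappa> * rho_d I B \<kappa> ^ k * stacked_norm I x0"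
      using \<open>2 \<le> I\<close> B_pos kappa_pos kappa_le_1 card_mult_kappa_power_le_1
      by (intro mult_right_mono push_sum_rate_le_c_d_rho_d) (auto simp: stacked_norm_nonneg)
    finally show ?thesis .
  qed
  then show ?thesis
    using conserved by (simp del: ps_phi.simps(2) ps_x.simps(2))
qed

end
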